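(* Let $n\geqslant 1$ and $0\leqslant d\leqslant n-1$ be integers. Then the following two identities of rational functions in $q$ hold: \begin{align*} &\sum_{k=0}^{n-1}q^k\begin{bmatrix}2k\\ k+d\end{bmatrix}(-q^{k+1};q)_{n-1-k}\\ &\quad=\sum_{\substack{k=0\\ k\equiv n-d \pmod 2}}^{n-d}(-1)^{(n-d-k)/2}q^{3(n^2+k^2-d^2)/4-3nk/2+n-k}\frac{(1-q^k)(1+q^{n-k+1})}{(1-q^{2n-k+1})(1+q^n)}\begin{bmatrix}2n\\ k\end{bmatrix}, \end{align*} and \begin{align*} &\sum_{k=0}^{n-1}q^k\begin{bmatrix}2k\\ k+d\end{bmatrix}(-q^{k+1};q)_{n-1-k}^2 =\sum_{k=d+1}^{n}\sum_{j=k+1}^{n+1}q^{(j^2-3j+k^2-k)/2-d^2+1}\,\frac{1+q^{j-1}}{1+q^n}\begin{bmatrix}2n\\ n-j+1\end{bmatrix}. \end{align*}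
   Context: Here $q$ is an indeterminate. For $n\geq 1$, $(x;q)_n=(1-x)(1-xq)\cdots(1-xq^{n-1})$ and $(x;q)_0=1$. The $q$-binomial coefficient is $\begin{bmatrix}n\\ k\end{bmatrix}=\frac{(q;q)_n}{(q;q)_k(q;q)_{n-k}}$ if $0\leqslant k\leqslant n$ and $0$ otherwise. *)

theory Defs
  imports "HOL-Computational_Algebra.Polynomial" "HOL-Computational_Algebra.Fraction_Field"
begin

definition qpoch :: "'a::field \<Rightarrow> 'a \<Rightarrow> nat \<Rightarrow> 'a" where
  "qpoch x q n = (\<Prod>i<n. 1 - x * q ^ i)"

definition qbinom :: "'a::field \<Rightarrow> nat \<Rightarrow> int \<Rightarrow> 'a" where
  "qbinom q n k = (if 0 \<le> k \<and> k \<le> int n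
      then qpoch q q n / (qpoch q q (nat k) * qpoch q q (n - nat k)) else 0)"

definition qvar :: "rat poly fract" where
  "qvar = Fract [:0, 1:] 1"

end

(*
  Splitting off the last factor 1 + q^n of each
  q-Pochhammer symbol shows that the left-hand sides satisfy
    L(n+1) = (1 + q^n)^m L(n) + q^n [2n; n+d]      (m = 1, 2).
  The right-hand sides, multiplied by 1 + q^n and by q^(d^2) (1 + q^n) respectively, obey the same
  recurrence by telescoping: in the manner of Wilf and Zeilberger, the increment in n of each
  summand is a difference of two consecutive certificate terms.  Every certificate identity reduces,
  via the q-Pascal rule applied twice and the ratio of adjacent q-binomial coefficients, to a
  polynomial identity in q and a few of its powers.  The argument works for any nonzero q in a
  field of characteristic 0 that is not a root of unity, and is then specialised to the
  indeterminate.
*)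
theory Submission
  imports Defs
begin

lemma qpoch_Suc: "qpoch x q (Suc n) = qpoch x q n * (1 - x * q ^ n)"
  by (simp add: qpoch_def)

lemma qbinom_eq_0: "k < 0 \<or> int N < k \<Longrightarrow> qbinom q N k = 0"
  by (auto simp: qbinom_def)

lemma qbinom_symmetric: "qbinom q N (int N - k) = qbinom q N k"
  by (auto simp: qbinom_def nat_diff_distrib mult.commute)

lemma qpoch_neg_power_Suc:
  assumes "k < n"
  shows "qpoch (- (q ^ (k + 1))) q (n - k) = qpoch (- (q ^ (k + 1))) q (n - 1 - k) * (1 + q ^ n)"
proof -
  have "n - k = Suc (n - 1 - k)" using assms by simp
  moreover have "q ^ (k + 1) * q ^ (n - 1 - k) = q ^ n"
    using assms power_add[of q "k + 1" "n - 1 - k"] by simp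
  ultimately show ?thesis by (simp add: qpoch_Suc del: power_Suc)
qed

lemma sum_qpoch_neg_power_Suc:
  "(\<Sum>k<Suc n. c k * qpoch (- (q ^ (k + 1))) q (Suc n - 1 - k) ^ m)
    = (1 + q ^ n) ^ m * (\<Sum>k<n. c k * qpoch (- (q ^ (k + 1))) q (n - 1 - k) ^ m) + c n"
proof -
  have "(\<Sum>k<n. c k * qpoch (- (q ^ (k + 1))) q (Suc n - 1 - k) ^ m)
      = (\<Sum>k<n. (1 + q ^ n) ^ m * (c k * qpoch (- (q ^ (k + 1))) q (n - 1 - k) ^ m))"
  proof (rule sum.cong[OF refl])
    fix k assume "k \<in> {..<n}"
    then have "qpoch (- (q ^ (k + 1))) q (Suc n - 1 - k)
        = qpoch (- (q ^ (k + 1))) q (n - 1 - k) * (1 + q ^ n)"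
      using qpoch_neg_power_Suc[of k n q] by simp
    then show "c k * qpoch (- (q ^ (k + 1))) q (Suc n - 1 - k) ^ m
        = (1 + q ^ n) ^ m * (c k * qpoch (- (q ^ (k + 1))) q (n - 1 - k) ^ m)"
      by (simp add: power_mult_distrib)
  qed
  then show ?thesis by (simp add: sum_distrib_left qpoch_def)
qed

lemma bij_betw_same_parity_atMost:
  fixes m :: nat
  shows "bij_betw (\<lambda>i. m - 2 * i) {..m div 2} {k. k \<le> m \<and> k mod 2 = m mod 2}"
proof (rule bij_betw_imageI)
  show "inj_on (\<lambda>i. m - 2 * i) {..m div 2}"
    by (rule inj_onI) simp
  show "(\<lambda>i. m - 2 * i) ` {..m div 2} = {k. k \<le> m \<and> k mod 2 = m mod 2}"
  proof (intro set_eqI iffI)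
    fix k assume "k \<in> {k. k \<le> m \<and> k mod 2 = m mod 2}"
    then have "k \<le> m" "2 dvd m - k" using mod_eq_dvd_iff_nat[of k m 2] by auto
    then obtain i where "m - k = 2 * i" by blast
    then have "k = m - 2 * i" "i \<le> m div 2" using \<open>k \<le> m\<close> by simp_all
    then show "k \<in> (\<lambda>i. m - 2 * i) ` {..m div 2}" by blast
  next
    fix k assume "k \<in> (\<lambda>i. m - 2 * i) ` {..m div 2}"
    then obtain i where "i \<le> m div 2" "k = m - 2 * i" by blast
    then have "k \<le> m" "2 dvd m - k" by simp_all
    then show "k \<in> {k. k \<le> m \<and> k mod 2 = m mod 2}" using mod_eq_dvd_iff_nat[of k m 2] by auto
  qed
qed

lemma Suc_choose_two: "Suc p choose 2 = (p choose 2) + p"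
  by (simp add: numeral_2_eq_2)

lemma choose_two_double: "2 * (p choose 2) + p = p\<^sup>2"
  by (induction p) (simp_all add: numeral_2_eq_2 power2_eq_square algebra_simps)

(* q powi k is only well behaved for q \<noteq> 0; the remaining hypothesis makes every q-factorial
   invertible. *)
locale generic_q =
  fixes q :: "'a::field_char_0"
  assumes nonzero: "q \<noteq> 0"
    and not_root_of_unity: "0 < k \<Longrightarrow> q ^ k \<noteq> 1"
begin

lemma one_minus_power_nonzero: "0 < k \<Longrightarrow> 1 - q ^ k \<noteq> 0"
  using not_root_of_unity by simp

lemma one_plus_power_nonzero: "1 + q ^ n \<noteq> 0"
proof
  assume "1 + q ^ n = 0"
  then have "q ^ n = - 1" by (simp add: eq_neg_iff_add_eq_0 add.commute)
  then have "q ^ (n * 2) = 1" by (simp add: power_mult)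
  moreover have "n \<noteq> 0" using \<open>q ^ n = - 1\<close> by (intro notI) simp
  ultimately show False using not_root_of_unity[of "n * 2"] by simp
qed

lemma qpoch_nonzero: "qpoch q q n \<noteq> 0"
  using not_root_of_unity[of "Suc _"] by (auto simp: qpoch_def)

lemma qbinom_0 [simp]: "qbinom q N 0 = 1"
  using qpoch_nonzero[of N] by (simp add: qbinom_def qpoch_def)

lemma qbinom_self [simp]: "qbinom q N (int N) = 1"
  using qpoch_nonzero[of N] by (simp add: qbinom_def qpoch_def)

(* Like the Pascal rules below, this holds for every integer k: outside 0..N both sides vanish,
   so the telescoping arguments need no boundary cases. *)
lemma qbinom_ratio:
  "(1 - q powi (k + 1)) * qbinom q N (k + 1) = (1 - q powi (int N - k)) * qbinom q N k"
proof -
  consider (outside) "k < -1 \<or> int N < k" | (bottom) "k = -1" | (top) "k = int N"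
    | (inside) "0 \<le> k \<and> k < int N"
    by linarith
  then show ?thesis
  proof cases
    case inside
    define a b where "a = nat k" and "b = N - nat k - 1"
    with inside have ab: "k = int a" "N = Suc (a + b)" by auto
    define x y where "x = q ^ Suc a" and "y = q ^ Suc b"
    have nz: "1 - x \<noteq> 0" "1 - y \<noteq> 0" "qpoch q q a \<noteq> 0" "qpoch q q b \<noteq> 0"
      unfolding x_def y_def by (simp_all add: not_root_of_unity qpoch_nonzero del: power_Suc)
    have "qbinom q N (k + 1) = qpoch q q N / (qpoch q q a * (1 - x) * qpoch q q b)"
      "qbinom q N k = qpoch q q N / (qpoch q q a * (qpoch q q b * (1 - y)))"
      using ab by (simp_all add: qbinom_def nat_add_distrib qpoch_Suc x_def y_def)
    moreover have "q powi (k + 1) = x" "q powi (int N - k) = y"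
      using ab nonzero by (simp_all add: x_def y_def power_int_add)
    ultimately show ?thesis using nz by simp
  qed (auto simp: qbinom_eq_0)
qed

lemma qbinom_pascal:
  "qbinom q (Suc N) k = q powi k * qbinom q N k + qbinom q N (k - 1)"
proof -
  consider (outside) "k < 0 \<or> int N + 1 < k" | (bottom) "k = 0" | (top) "k = int N + 1"
    | (inside) "0 < k \<and> k \<le> int N"
    by linarith
  then show ?thesis
  proof cases
    case inside
    define a b where "a = nat k - 1" and "b = N - nat k"
    with inside have ab: "k = int (Suc a)" "N = Suc (a + b)" by auto
    define x y C where "x = q ^ Suc a" and "y = q ^ Suc b"
      and "C = qpoch q q N / (qpoch q q a * qpoch q q b)"
    have nz: "1 - x \<noteq> 0" "1 - y \<noteq> 0"
      unfolding x_def y_def by (simp_all add: not_root_of_unity del: power_Suc)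
    have "q * q ^ N = x * y"
      using ab by (simp add: x_def y_def power_add[symmetric])
    then have "qbinom q (Suc N) k = C * ((1 - x * y) / ((1 - x) * (1 - y)))"
      "qbinom q N k = C / (1 - x)" "qbinom q N (k - 1) = C / (1 - y)"
      using ab by (simp_all add: qbinom_def nat_add_distrib qpoch_Suc x_def y_def C_def power_add mult_ac)
    moreover have "q powi k = x"
      using ab by (simp add: x_def power_int_of_nat[symmetric])
    moreover have "(1 - x * y) / ((1 - x) * (1 - y)) = x / (1 - x) + 1 / (1 - y)"
      using nz by (simp add: field_simps)
    ultimately show ?thesis by (simp add: distrib_left)
  qed (use qbinom_self[of "Suc N"] in \<open>auto simp: qbinom_eq_0 add.commute\<close>)
qed

lemma qbinom_pascal':
  "qbinom q (Suc N) k = qbinom q N k + q powi (int N + 1 - k) * qbinom q N (k - 1)"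
  using qbinom_pascal[of N "int N + 1 - k"] qbinom_symmetric[of q "Suc N" k]
    qbinom_symmetric[of q N k] qbinom_symmetric[of q N "k - 1"]
  by (simp add: algebra_simps)

lemma qbinom_Suc_Suc:
  "qbinom q (Suc (Suc N)) (k + 1) = (1 + q ^ Suc N) * qbinom q N k
     + q powi (int N + 1 - k) * qbinom q N (k - 1) + q powi (k + 1) * qbinom q N (k + 1)"
proof -
  define u v where "u = q powi (k + 1)" and "v = q powi (int N - k)"
  have "u * v = q powi int (Suc N)"
    using nonzero by (simp add: u_def v_def power_int_add[symmetric])
  then have uv: "u * v = q ^ Suc N" by (simp only: power_int_of_nat)
  have ratio: "(1 - u) * qbinom q N (k + 1) = (1 - v) * qbinom q N k"
    unfolding u_def v_def by (rule qbinom_ratio)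
  have "qbinom q (Suc (Suc N)) (k + 1) = u * qbinom q (Suc N) (k + 1) + qbinom q (Suc N) k"
    unfolding u_def by (simp add: qbinom_pascal)
  also have "\<dots> = u * (u * qbinom q N (k + 1) + qbinom q N k)
      + (qbinom q N k + q powi (int N + 1 - k) * qbinom q N (k - 1))"
    unfolding u_def by (simp add: qbinom_pascal[of N "k + 1"] qbinom_pascal'[of N k])
  also have "\<dots> = (1 + u * v) * qbinom q N k + q powi (int N + 1 - k) * qbinom q N (k - 1)
      + u * qbinom q N (k + 1) - u * ((1 - u) * qbinom q N (k + 1) - (1 - v) * qbinom q N k)"
    by (simp add: algebra_simps)
  also have "\<dots> = (1 + q ^ Suc N) * qbinom q N k + q powi (int N + 1 - k) * qbinom q N (k - 1)
      + u * qbinom q N (k + 1)"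
    by (simp add: ratio uv)
  finally show ?thesis unfolding u_def .
qed

lemma power_int_of_nat_add: "q powi (int a + b) = q ^ a * q powi b"
  using nonzero by (simp add: power_int_add)

lemma qbinom_alternating_step:
  assumes "int n = int r + j"
  shows "q ^ r * (1 + q ^ (r + 1)) * qbinom q (2 * n + 2) j
      - (1 + q ^ (n + 1)) * (q ^ r * (1 + q ^ (r + 1))) * qbinom q (2 * n) (j - 1)
    = q ^ (n + 3 * r + 3) * (1 + q ^ (n + 1)) * qbinom q (2 * n) (j - 2)
      + q ^ n * (1 + q ^ (n + 1)) * qbinom q (2 * n) j" (is "?lhs = ?rhs")
proof -
  define x y where "x = q ^ r" and "y = q powi j"
  define B0 Bp Bm where "B0 = qbinom q (2 * n) (j - 1)" and "Bp = qbinom q (2 * n) j"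
    and "Bm = qbinom q (2 * n) (j - 2)"
  have n: "q ^ n = x * y"
    using assms power_int_of_nat_add[of r j] by (simp flip: power_int_of_nat add: x_def y_def)
  have exps: "int (2 * n) + 1 - (j - 1) = int (2 * r + 2) + j" "int (2 * n) - (j - 1) = int (2 * r + 1) + j"
    "int (2 * n) - (j - 2) = int (2 * r + 2) + j"
    using assms by simp_all
  have "q ^ Suc (2 * n) = q * (q ^ n) ^ 2" "q ^ (n + 3 * r + 3) = q ^ 3 * x ^ 3 * q ^ n"
    by (simp add: power_mult mult.commute)
      (simp add: x_def power_add power_mult[of q r 3, symmetric] mult.commute[of 3 r])
  then have powers: "q powi (int (2 * n) + 1 - (j - 1)) = q ^ 2 * x ^ 2 * y"
    "q powi (int (2 * n) - (j - 1)) = q * x ^ 2 * y" "q powi (int (2 * n) - (j - 2)) = q ^ 2 * x ^ 2 * y"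
    "q ^ Suc (2 * n) = q * x ^ 2 * y ^ 2" "q * q powi (j - 1) = y"
    "q ^ (r + 1) = q * x" "q ^ (n + 1) = q * x * y" "q ^ (n + 3 * r + 3) = q ^ 3 * x ^ 3 * (x * y)"
    unfolding exps power_int_of_nat_add using n nonzero
    by (simp_all add: x_def y_def power_add power_even_eq power_mult_distrib power_int_diff power2_eq_square)
  have expansion: "qbinom q (2 * n + 2) j = (1 + q * x ^ 2 * y ^ 2) * B0 + q ^ 2 * x ^ 2 * y * Bm + y * Bp"
    using qbinom_Suc_Suc[of "2 * n" "j - 1"] unfolding powers B0_def Bp_def Bm_def y_def by simp
  have ratio1: "(1 - y) * Bp = (1 - q * x ^ 2 * y) * B0"
    using qbinom_ratio[of "j - 1" "2 * n"] unfolding powers B0_def Bp_def y_def by simp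
  have "(1 - q powi (j - 1)) * B0 = (1 - q ^ 2 * x ^ 2 * y) * Bm"
    using qbinom_ratio[of "j - 2" "2 * n"] unfolding powers B0_def Bm_def by simp
  then have ratio2: "(q - y) * B0 = q * (1 - q ^ 2 * x ^ 2 * y) * Bm"
    using powers(5) by algebra
  have "?lhs - ?rhs = q * x ^ 2 * y * ((1 + q * x) * (x * y - 1) * B0
      + x * (q * (1 - q ^ 2 * x ^ 2 * y) * Bm) + (1 - y) * Bp)"
    unfolding expansion n powers(6-8) B0_def[symmetric] Bp_def[symmetric] Bm_def[symmetric] x_def[symmetric]
    by algebra
  also have "\<dots> = q * x ^ 2 * y * ((1 + q * x) * (x * y - 1) + x * (q - y) + (1 - q * x ^ 2 * y)) * B0"
    unfolding ratio1 ratio2[symmetric] by (simp add: algebra_simps)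
  also have "\<dots> = 0"
    by algebra
  finally show ?thesis by simp
qed

(* By qbinom_ratio, alt_term d n i / (1 + q^n) is the summand k = n - d - 2i of the first
   right-hand side, with [2n; k] traded for [2n; k - 1]. *)
definition alt_term :: "nat \<Rightarrow> nat \<Rightarrow> nat \<Rightarrow> 'a" where
  "alt_term d n i = (-1) ^ i * q ^ (3 * i\<^sup>2 + 3 * d * i) * (q ^ (d + 2 * i) * (1 + q ^ (d + 2 * i + 1)))
     * qbinom q (2 * n) (int n - int (d + 2 * i) - 1)"

definition alt_cert :: "nat \<Rightarrow> nat \<Rightarrow> nat \<Rightarrow> 'a" where
  "alt_cert d n i = (-1) ^ Suc i * q ^ (3 * i\<^sup>2 + 3 * d * i) * (q ^ n * (1 + q ^ (n + 1)))
     * qbinom q (2 * n) (int n - int (d + 2 * i))"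

lemma alt_term_Suc:
  "alt_term d (Suc n) i - (1 + q ^ (n + 1)) * alt_term d n i = alt_cert d n (Suc i) - alt_cert d n i"
proof -
  define r j c where "r = d + 2 * i" and "j = int n - int r"
    and "c = (-1) ^ i * q ^ (3 * i\<^sup>2 + 3 * d * i)"
  have idx: "int (Suc n) - int (d + 2 * i) - 1 = j" "int n - int (d + 2 * i) - 1 = j - 1"
    "int n - int (d + 2 * Suc i) = j - 2" "int n - int (d + 2 * i) = j" "2 * Suc n = 2 * n + 2"
    by (simp_all add: j_def r_def)
  have "3 * (Suc i)\<^sup>2 + 3 * d * Suc i = 3 * i\<^sup>2 + 3 * d * i + (3 * r + 3)"
    by (simp add: r_def power2_eq_square algebra_simps)
  then have "q ^ (3 * (Suc i)\<^sup>2 + 3 * d * Suc i) = q ^ (3 * i\<^sup>2 + 3 * d * i) * q ^ (3 * r + 3)"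
    by (simp only: power_add)
  then have cert_Suc: "alt_cert d n (Suc i)
      = c * (q ^ (n + 3 * r + 3) * (1 + q ^ (n + 1))) * qbinom q (2 * n) (j - 2)"
    unfolding alt_cert_def idx by (simp add: c_def power_add mult_ac)
  have reps: "alt_term d (Suc n) i = c * (q ^ r * (1 + q ^ (r + 1))) * qbinom q (2 * n + 2) j"
    "alt_term d n i = c * (q ^ r * (1 + q ^ (r + 1))) * qbinom q (2 * n) (j - 1)"
    "alt_cert d n i = - c * (q ^ n * (1 + q ^ (n + 1))) * qbinom q (2 * n) j"
    unfolding alt_term_def alt_cert_def idx by (simp_all add: c_def r_def)
  have "int n = int r + j" by (simp add: j_def)
  note step = qbinom_alternating_step[OF this]
  have "alt_term d (Suc n) i - (1 + q ^ (n + 1)) * alt_term d n i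
      = c * (q ^ r * (1 + q ^ (r + 1)) * qbinom q (2 * n + 2) j
        - (1 + q ^ (n + 1)) * (q ^ r * (1 + q ^ (r + 1))) * qbinom q (2 * n) (j - 1))"
    unfolding reps by algebra
  also have "\<dots> = alt_cert d n (Suc i) - alt_cert d n i"
    unfolding step cert_Suc reps by algebra
  finally show ?thesis .
qed

definition alt_sum :: "nat \<Rightarrow> nat \<Rightarrow> 'a" where
  "alt_sum d n = (\<Sum>i\<le>n. alt_term d n i)"

lemma alt_sum_Suc:
  "alt_sum d (Suc n) = (1 + q ^ (n + 1)) * (alt_sum d n + q ^ n * qbinom q (2 * n) (int n + int d))"
proof -
  have "alt_sum d (Suc n) - (1 + q ^ (n + 1)) * alt_sum d n
      = (\<Sum>i<Suc (Suc n). alt_term d (Suc n) i - (1 + q ^ (n + 1)) * alt_term d n i)"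
    by (simp add: alt_sum_def sum_subtractf sum_distrib_left lessThan_Suc_atMost alt_term_def qbinom_eq_0)
  also have "\<dots> = alt_cert d n (Suc (Suc n)) - alt_cert d n 0"
    by (simp only: alt_term_Suc sum_lessThan_telescope)
  also have "\<dots> = q ^ n * (1 + q ^ (n + 1)) * qbinom q (2 * n) (int n + int d)"
    using qbinom_symmetric[of q "2 * n" "int n + int d"] by (simp add: alt_cert_def qbinom_eq_0)
  finally show ?thesis by (simp add: algebra_simps)
qed

lemma scaled_qpoch_sum_eq_alt_sum:
  "(1 + q ^ n) * (\<Sum>k<n. q ^ k * qbinom q (2 * k) (int k + int d) * qpoch (- (q ^ (k + 1))) q (n - 1 - k))
    = alt_sum d n"
proof (induction n)
  case 0
  then show ?case by (simp add: alt_sum_def alt_term_def qbinom_eq_0)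
next
  case (Suc n)
  have "(\<Sum>k<Suc n. q ^ k * qbinom q (2 * k) (int k + int d) * qpoch (- (q ^ (k + 1))) q (Suc n - 1 - k))
      = (1 + q ^ n)
          * (\<Sum>k<n. q ^ k * qbinom q (2 * k) (int k + int d) * qpoch (- (q ^ (k + 1))) q (n - 1 - k))
        + q ^ n * qbinom q (2 * n) (int n + int d)"
    using sum_qpoch_neg_power_Suc
      [where c = "\<lambda>k. q ^ k * qbinom q (2 * k) (int k + int d)" and m = 1 and q = q]
    by simp
  then show ?case
    by (simp only: Suc.IH) (simp add: alt_sum_Suc)
qed

lemma alt_term_eq_first_rhs_term:
  assumes "n = k + d + 2 * i"
  shows "(-1) ^ ((n - d - k) div 2)
      * q powi ((3 * (int n ^ 2 + int k ^ 2 - int d ^ 2) - 6 * int n * int k + 4 * int n - 4 * int k) div 4)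
      * ((1 - q ^ k) * (1 + q ^ (n - k + 1)) / ((1 - q ^ (2 * n - k + 1)) * (1 + q ^ n)))
      * qbinom q (2 * n) (int k)
    = alt_term d n i / (1 + q ^ n)" (is "?lhs = _")
proof -
  have "3 * (int n ^ 2 + int k ^ 2 - int d ^ 2) - 6 * int n * int k + 4 * int n - 4 * int k
      = 4 * int (3 * i\<^sup>2 + 3 * d * i + (d + 2 * i))" (is "?e = _")
    using assms by (simp add: power2_eq_square algebra_simps)
  then have "?e div 4 = int (3 * i\<^sup>2 + 3 * d * i + (d + 2 * i))" by simp
  then have exponent: "q powi (?e div 4) = q ^ (3 * i\<^sup>2 + 3 * d * i) * q ^ (d + 2 * i)"
    by (simp only: power_int_of_nat power_add)
  have "(1 - q powi (int k - 1 + 1)) * qbinom q (2 * n) (int k - 1 + 1)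
      = (1 - q powi (int (2 * n) - (int k - 1))) * qbinom q (2 * n) (int k - 1)"
    by (rule qbinom_ratio)
  moreover have "int (2 * n) - (int k - 1) = int (2 * n - k + 1)" using assms by simp
  ultimately have "(1 - q ^ k) * qbinom q (2 * n) (int k)
      = (1 - q ^ (2 * n - k + 1)) * qbinom q (2 * n) (int k - 1)"
    by (simp only: power_int_of_nat) simp
  moreover have nz: "1 - q ^ (2 * n - k + 1) \<noteq> 0" by (rule one_minus_power_nonzero) simp
  ultimately have ratio: "(1 - q ^ k) * qbinom q (2 * n) (int k) / (1 - q ^ (2 * n - k + 1))
      = qbinom q (2 * n) (int k - 1)"
    by simp
  have "(n - d - k) div 2 = i" using assms by simp
  then have "?lhs = (-1) ^ i * (q ^ (3 * i\<^sup>2 + 3 * d * i) * q ^ (d + 2 * i)) * (1 + q ^ (n - k + 1))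
      * ((1 - q ^ k) * qbinom q (2 * n) (int k) / (1 - q ^ (2 * n - k + 1))) / (1 + q ^ n)"
    unfolding exponent by (simp add: divide_inverse mult_ac)
  also have "\<dots> = alt_term d n i / (1 + q ^ n)"
    unfolding ratio using assms by (simp add: alt_term_def)
  finally show ?thesis .
qed

lemma alt_term_eq_0: "(n - d) div 2 < i \<Longrightarrow> alt_term d n i = 0"
  by (simp add: alt_term_def qbinom_eq_0)

theorem weighted_qpoch_sum_eq_alternating_sum:
  assumes "d \<le> n"
  shows "(\<Sum>k<n. q ^ k * qbinom q (2*k) (int k + int d) * qpoch (- (q ^ (k+1))) q (n - 1 - k))
       = (\<Sum>k\<in>{k. k \<le> n - d \<and> k mod 2 = (n - d) mod 2}.
            (-1) ^ ((n - d - k) div 2)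
            * q powi ((3 * (int n ^ 2 + int k ^ 2 - int d ^ 2) - 6 * int n * int k
                        + 4 * int n - 4 * int k) div 4)
            * ((1 - q ^ k) * (1 + q ^ (n - k + 1)) / ((1 - q ^ (2*n - k + 1)) * (1 + q ^ n)))
            * qbinom q (2*n) (int k))" (is "?L = sum ?term _")
proof -
  have "sum ?term {k. k \<le> n - d \<and> k mod 2 = (n - d) mod 2}
      = (\<Sum>i\<le>(n - d) div 2. ?term (n - d - 2 * i))"
    by (rule sum.reindex_bij_betw[OF bij_betw_same_parity_atMost, symmetric])
  also have "\<dots> = (\<Sum>i\<le>(n - d) div 2. alt_term d n i / (1 + q ^ n))"
  proof (rule sum.cong[OF refl])
    fix i assume "i \<in> {..(n - d) div 2}"
    then have "n = (n - d - 2 * i) + d + 2 * i" using assms by auto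
    then show "?term (n - d - 2 * i) = alt_term d n i / (1 + q ^ n)"
      by (rule alt_term_eq_first_rhs_term)
  qed
  also have "\<dots> = alt_sum d n / (1 + q ^ n)"
    unfolding alt_sum_def sum_divide_distrib
    by (rule sum.mono_neutral_left) (auto simp: alt_term_eq_0)
  also have "\<dots> = ?L"
    using scaled_qpoch_sum_eq_alt_sum[of n d] one_plus_power_nonzero[of n]
    by (simp add: divide_eq_eq mult.commute)
  finally show ?thesis ..
qed

(* Up to the factor q^(k choose 2) / (q^(d^2) (1 + q^n)), tri_term n (j - 1) is the (k, j) summand
   of the second right-hand side, since (j^2 - 3j + k^2 - k)/2 + 1 = (j - 1 choose 2) + (k choose 2)
   and [2n; n - j + 1] = [2n; n + j - 1]. *)
definition tri_term :: "nat \<Rightarrow> nat \<Rightarrow> 'a" where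
  "tri_term n s = q ^ (s choose 2) * (1 + q ^ s) * qbinom q (2 * n) (int n + int s)"

definition tri_cert :: "nat \<Rightarrow> nat \<Rightarrow> 'a" where
  "tri_cert n p = q ^ n * (q ^ (Suc p choose 2) * (q + q ^ Suc p) * qbinom q (2 * n) (int n + int p + 1)
     - q ^ (p choose 2) * (1 + q ^ Suc p) * qbinom q (2 * n) (int n + int p))"

definition sq_term :: "nat \<Rightarrow> nat \<Rightarrow> 'a" where
  "sq_term n p = q ^ p\<^sup>2 * (1 + q ^ (n + 1)) * qbinom q (2 * n) (int n + int p)"

lemma tri_term_Suc:
  "tri_term (Suc n) (Suc p) - (1 + q ^ n) * (1 + q ^ (n + 1)) * tri_term n (Suc p)
    = tri_cert n (Suc p) - tri_cert n p"
proof -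
  define j where "j = int n + int p"
  define t x y X where "t = q ^ (p choose 2)" and "x = q ^ p" and "y = q powi (int n - int p)"
    and "X = q ^ n"
  define B0 Bm Bp where "B0 = qbinom q (2 * n) (j + 1)" and "Bm = qbinom q (2 * n) j"
    and "Bp = qbinom q (2 * n) (j + 2)"
  have xy: "x * y = X"
    using power_int_of_nat_add[of p "int n - int p"] by (simp add: x_def y_def X_def flip: power_int_of_nat)
  have idx: "int (Suc n) + int (Suc p) = j + 2" "int n + int (Suc p) = j + 1" "int n + int p = j"
    "2 * Suc n = Suc (Suc (2 * n))" "j + 1 + 1 = j + 2"
    by (simp_all add: j_def)
  have "int (2 * n) + 1 - (j + 1) = int n - int p" "j + 1 - 1 = j" "j + 1 + 1 = j + 2"
    by (simp_all add: j_def)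
  moreover have "q powi (j + 2) = q\<^sup>2 * X * x"
  proof -
    have "j + 2 = int (2 + n + p)" by (simp add: j_def)
    then show ?thesis by (simp only: power_int_of_nat power_add X_def x_def)
  qed
  moreover have "q ^ Suc (2 * n) = q * X\<^sup>2"
    by (simp add: X_def power_even_eq)
  ultimately have expansion:
      "qbinom q (Suc (Suc (2 * n))) (j + 2) = (1 + q * X\<^sup>2) * B0 + y * Bm + q\<^sup>2 * X * x * Bp"
    using qbinom_Suc_Suc[of "2 * n" "j + 1"] by (simp only: B0_def Bm_def Bp_def y_def)
  have pw: "q ^ (Suc p choose 2) = t * x" "q ^ (Suc (Suc p) choose 2) = q * t * x\<^sup>2"
    "q ^ Suc p = q * x" "q ^ Suc (Suc p) = q\<^sup>2 * x"
    by (simp_all add: Suc_choose_two t_def x_def power_add power2_eq_square)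
  have reps: "tri_term (Suc n) (Suc p) = t * x * (1 + q * x) * qbinom q (Suc (Suc (2 * n))) (j + 2)"
    "tri_term n (Suc p) = t * x * (1 + q * x) * B0"
    "tri_cert n (Suc p)
      = X * (q * t * x\<^sup>2 * (q + q\<^sup>2 * x) * Bp - t * x * (1 + q\<^sup>2 * x) * B0)"
    "tri_cert n p = X * (t * x * (q + q * x) * B0 - t * (1 + q * x) * Bm)"
    "q ^ (n + 1) = q * X" "q ^ n = X"
    unfolding tri_term_def tri_cert_def idx pw by (simp_all add: B0_def Bm_def Bp_def X_def t_def)
  show ?thesis
    unfolding reps expansion xy[symmetric] by algebra
qed

lemma tri_cert_weighted:
  "q ^ (Suc p choose 2) * tri_cert n p = q ^ n * (sq_term n (Suc p) - sq_term n p)" (is "?lhs = ?rhs")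
proof -
  define j where "j = int n + int p"
  define t x y X where "t = q ^ (p choose 2)" and "x = q ^ p" and "y = q powi (int n - int p)"
    and "X = q ^ n"
  define B0 B1 where "B0 = qbinom q (2 * n) j" and "B1 = qbinom q (2 * n) (j + 1)"
  have xy: "x * y = X"
    using power_int_of_nat_add[of p "int n - int p"] by (simp add: x_def y_def X_def flip: power_int_of_nat)
  have idx: "int n + int p = j" "int n + int (Suc p) = j + 1" by (simp_all add: j_def)
  have "int (2 * n) - j = int n - int p" "j + 1 = int (Suc (n + p))" by (simp_all add: j_def)
  then have ratio: "(1 - q * X * x) * B1 = (1 - y) * B0"
    using qbinom_ratio[of j "2 * n"]
    by (simp only: B0_def B1_def y_def power_int_of_nat) (simp add: X_def x_def power_add mult.assoc)
  have "q ^ p\<^sup>2 = t\<^sup>2 * x"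
    using choose_two_double[of p] by (metis t_def x_def power_add power_even_eq)
  then have pw: "q ^ (Suc p choose 2) = t * x" "q ^ Suc p = q * x" "q ^ p\<^sup>2 = t\<^sup>2 * x"
    "q ^ (Suc p)\<^sup>2 = q * t\<^sup>2 * x * x\<^sup>2" "q ^ (n + 1) = q * X" "q ^ n = X"
    by (simp_all add: Suc_choose_two t_def x_def X_def power_add power2_eq_square)
  have "tri_cert n p = X * (t * x * (q + q * x) * B1 - t * (1 + q * x) * B0)"
    "sq_term n p = t\<^sup>2 * x * (1 + q * X) * B0"
    "sq_term n (Suc p) = q * t\<^sup>2 * x * x\<^sup>2 * (1 + q * X) * B1"
    unfolding tri_cert_def sq_term_def pw idx by (simp_all add: t_def B0_def B1_def)
  then have "?lhs - ?rhs = X * t\<^sup>2 * x * q * (x * ((1 - q * X * x) * B1) - (x - X) * B0)"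
    unfolding pw by algebra
  also have "\<dots> = X * t\<^sup>2 * x * q * (x * ((1 - y) * B0) - (x - X) * B0)"
    by (simp only: ratio)
  also have "\<dots> = 0"
    unfolding xy[symmetric] by algebra
  finally show ?thesis by simp
qed

lemma tri_tail_sum_Suc:
  assumes "p \<le> n"
  shows "(\<Sum>s = Suc p..Suc n. tri_term (Suc n) s)
    = (1 + q ^ n) * (1 + q ^ (n + 1)) * (\<Sum>s = Suc p..n. tri_term n s) - tri_cert n p"
proof -
  have "(\<Sum>s = Suc p..Suc n. tri_term (Suc n) s) = (\<Sum>s = p..n. tri_term (Suc n) (Suc s))"
    by (rule sum.shift_bounds_cl_Suc_ivl)
  also have "\<dots> = (\<Sum>s = p..n. (1 + q ^ n) * (1 + q ^ (n + 1)) * tri_term n (Suc s)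
      + (tri_cert n (Suc s) - tri_cert n s))"
    by (simp add: tri_term_Suc[symmetric])
  also have "\<dots> = (1 + q ^ n) * (1 + q ^ (n + 1)) * (\<Sum>s = Suc p..Suc n. tri_term n s)
      + (tri_cert n (Suc n) - tri_cert n p)"
    by (simp only: sum.distrib sum_distrib_left sum.shift_bounds_cl_Suc_ivl
        sum_Suc_diff[OF le_SucI[OF assms]])
  finally have "(\<Sum>s = Suc p..Suc n. tri_term (Suc n) s) = (1 + q ^ n) * (1 + q ^ (n + 1))
      * (\<Sum>s = Suc p..Suc n. tri_term n s) + (tri_cert n (Suc n) - tri_cert n p)" .
  moreover have "tri_cert n (Suc n) = 0" "tri_term n (Suc n) = 0"
    by (simp_all add: tri_cert_def tri_term_def qbinom_eq_0)
  ultimately show ?thesis using assms by simp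
qed

definition tri_double_sum :: "nat \<Rightarrow> nat \<Rightarrow> 'a" where
  "tri_double_sum d n = (\<Sum>k = Suc d..n. q ^ (k choose 2) * (\<Sum>s = k..n. tri_term n s))"

lemma tri_double_sum_Suc:
  assumes "d \<le> n"
  shows "tri_double_sum d (Suc n)
    = (1 + q ^ n) * (1 + q ^ (n + 1)) * tri_double_sum d n + q ^ n * sq_term n d"
proof -
  have "tri_double_sum d (Suc n)
      = (\<Sum>p = d..n. q ^ (Suc p choose 2) * (\<Sum>s = Suc p..Suc n. tri_term (Suc n) s))"
    by (simp only: tri_double_sum_def sum.shift_bounds_cl_Suc_ivl)
  also have "\<dots> = (\<Sum>p = d..n.
      (1 + q ^ n) * (1 + q ^ (n + 1)) * (q ^ (Suc p choose 2) * (\<Sum>s = Suc p..n. tri_term n s))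
      - q ^ (Suc p choose 2) * tri_cert n p)"
  proof (rule sum.cong[OF refl])
    fix p assume "p \<in> {d..n}"
    then have "(\<Sum>s = Suc p..Suc n. tri_term (Suc n) s)
        = (1 + q ^ n) * (1 + q ^ (n + 1)) * (\<Sum>s = Suc p..n. tri_term n s) - tri_cert n p"
      by (intro tri_tail_sum_Suc) simp
    then show "q ^ (Suc p choose 2) * (\<Sum>s = Suc p..Suc n. tri_term (Suc n) s)
        = (1 + q ^ n) * (1 + q ^ (n + 1)) * (q ^ (Suc p choose 2) * (\<Sum>s = Suc p..n. tri_term n s))
          - q ^ (Suc p choose 2) * tri_cert n p"
      by (simp only:) (simp add: algebra_simps del: sum.cl_ivl_Suc)
  qed
  also have "\<dots> = (1 + q ^ n) * (1 + q ^ (n + 1))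
        * (\<Sum>p = d..n. q ^ (Suc p choose 2) * (\<Sum>s = Suc p..n. tri_term n s))
      - (\<Sum>p = d..n. q ^ (Suc p choose 2) * tri_cert n p)"
    by (simp only: sum_subtractf sum_distrib_left)
  also have "(\<Sum>p = d..n. q ^ (Suc p choose 2) * (\<Sum>s = Suc p..n. tri_term n s))
      = (\<Sum>k = Suc d..Suc n. q ^ (k choose 2) * (\<Sum>s = k..n. tri_term n s))"
    by (rule sum.shift_bounds_cl_Suc_ivl[symmetric])
  also have "\<dots> = tri_double_sum d n"
    using assms by (simp add: tri_double_sum_def)
  also have "(\<Sum>p = d..n. q ^ (Suc p choose 2) * tri_cert n p)
      = q ^ n * (sq_term n (Suc n) - sq_term n d)"
    using assms by (simp only: tri_cert_weighted sum_distrib_left[symmetric] sum_Suc_diff le_SucI)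
  also have "sq_term n (Suc n) = 0"
    by (simp add: sq_term_def qbinom_eq_0)
  finally show ?thesis by simp
qed

lemma scaled_qpoch_square_sum_eq_tri_double_sum:
  assumes "d \<le> n"
  shows "q ^ d\<^sup>2 * (1 + q ^ n)
      * (\<Sum>k<n. q ^ k * qbinom q (2 * k) (int k + int d)
          * (qpoch (- (q ^ (k + 1))) q (n - 1 - k))\<^sup>2)
    = tri_double_sum d n"
  using assms
proof (induction n rule: dec_induct)
  case base
  have "qbinom q (2 * k) (int k + int d) = 0" if "k < d" for k
    using that by (simp add: qbinom_eq_0)
  then show ?case by (simp add: tri_double_sum_def)
next
  case (step n)
  define L where "L n = (\<Sum>k<n. q ^ k * qbinom q (2 * k) (int k + int d)
      * (qpoch (- (q ^ (k + 1))) q (n - 1 - k))\<^sup>2)" for n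
  have "L (Suc n) = (1 + q ^ n)\<^sup>2 * L n + q ^ n * qbinom q (2 * n) (int n + int d)"
    using sum_qpoch_neg_power_Suc
      [where c = "\<lambda>k. q ^ k * qbinom q (2 * k) (int k + int d)" and m = 2 and q = q]
    by (simp add: L_def)
  then have "q ^ d\<^sup>2 * (1 + q ^ Suc n) * L (Suc n)
      = (1 + q ^ n) * (1 + q ^ (n + 1)) * (q ^ d\<^sup>2 * (1 + q ^ n) * L n) + q ^ n * sq_term n d"
    by (simp add: sq_term_def power2_eq_square algebra_simps)
  then show ?case
    using step.IH by (simp add: L_def tri_double_sum_Suc[OF step.hyps(1)])
qed

lemma tri_term_eq_second_rhs_term:
  "q powi ((int (Suc s) ^ 2 - 3 * int (Suc s) + int k ^ 2 - int k) div 2 - int d ^ 2 + 1)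
      * ((1 + q ^ (Suc s - 1)) / (1 + q ^ n)) * qbinom q (2 * n) (int n - int (Suc s) + 1)
    = q ^ (k choose 2) * tri_term n s / (q ^ d\<^sup>2 * (1 + q ^ n))" (is "q powi ?e * _ * _ = _")
proof -
  have "2 * int (s choose 2) + int s = int s ^ 2" "2 * int (k choose 2) + int k = int k ^ 2"
    using arg_cong[OF choose_two_double[of s], of int] arg_cong[OF choose_two_double[of k], of int]
    by simp_all
  then have "?e = int ((s choose 2) + (k choose 2)) - int (d\<^sup>2)"
    by (simp add: power2_eq_square algebra_simps)
  then have "q powi ?e = q ^ (s choose 2) * q ^ (k choose 2) / q ^ d\<^sup>2"
    using nonzero by (simp only: power_int_diff power_int_of_nat power_add simp_thms)
  moreover have "qbinom q (2 * n) (int n - int (Suc s) + 1) = qbinom q (2 * n) (int n + int s)"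
    using qbinom_symmetric[of q "2 * n" "int n + int s"] by simp
  ultimately show ?thesis
    by (simp add: tri_term_def divide_inverse mult_ac)
qed

theorem weighted_qpoch_square_sum_eq_double_sum:
  assumes "d \<le> n"
  shows "(\<Sum>k<n. q ^ k * qbinom q (2*k) (int k + int d) * (qpoch (- (q ^ (k+1))) q (n - 1 - k))^2)
       = (\<Sum>k=d+1..n. \<Sum>j=k+1..n+1.
            q powi ((int j ^ 2 - 3 * int j + int k ^ 2 - int k) div 2 - int d ^ 2 + 1)
            * ((1 + q ^ (j - 1)) / (1 + q ^ n))
            * qbinom q (2*n) (int n - int j + 1))"
proof -
  have inner: "(\<Sum>j=k+1..n+1. q powi ((int j ^ 2 - 3 * int j + int k ^ 2 - int k) div 2 - int d ^ 2 + 1)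
        * ((1 + q ^ (j - 1)) / (1 + q ^ n)) * qbinom q (2*n) (int n - int j + 1))
      = (\<Sum>s=k..n. q ^ (k choose 2) * tri_term n s / (q ^ d\<^sup>2 * (1 + q ^ n)))" for k
    unfolding Suc_eq_plus1[symmetric] sum.shift_bounds_cl_Suc_ivl
    by (rule sum.cong[OF refl]) (rule tri_term_eq_second_rhs_term)
  have "(\<Sum>k=d+1..n. \<Sum>j=k+1..n+1.
            q powi ((int j ^ 2 - 3 * int j + int k ^ 2 - int k) div 2 - int d ^ 2 + 1)
            * ((1 + q ^ (j - 1)) / (1 + q ^ n)) * qbinom q (2*n) (int n - int j + 1))
      = (\<Sum>k=d+1..n. \<Sum>s=k..n. q ^ (k choose 2) * tri_term n s / (q ^ d\<^sup>2 * (1 + q ^ n)))"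
    by (rule sum.cong[OF refl]) (rule inner)
  also have "\<dots> = tri_double_sum d n / (q ^ d\<^sup>2 * (1 + q ^ n))"
    by (simp add: tri_double_sum_def sum_divide_distrib sum_distrib_left)
  also have "\<dots>
      = (\<Sum>k<n. q ^ k * qbinom q (2*k) (int k + int d) * (qpoch (- (q ^ (k+1))) q (n - 1 - k))^2)"
    using scaled_qpoch_square_sum_eq_tri_double_sum[OF assms] nonzero one_plus_power_nonzero[of n]
    by (simp add: divide_eq_eq mult_ac)
  finally show ?thesis ..
qed

end

lemma qvar_power: "qvar ^ k = Fract (monom 1 k) 1"
proof (induction k)
  case 0
  then show ?case by (simp add: One_fract_def monom_0 one_pCons)
next
  case (Suc k)
  have "[:0, 1:] * monom (1::rat) k = monom 1 (Suc k)"
    by (simp add: monom_Suc)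
  then show ?case using Suc by (simp add: qvar_def)
qed

interpretation qvar: generic_q qvar
proof
  show "qvar \<noteq> 0"
    by (simp add: qvar_def Zero_fract_def eq_fract)
  fix k :: nat
  assume "0 < k"
  then have "monom (1::rat) k \<noteq> 1"
    by (metis degree_1 degree_monom_eq one_neq_zero less_numeral_extra(3))
  then show "qvar ^ k \<noteq> 1"
    by (simp add: qvar_power One_fract_def eq_fract)
qed

theorem theorem1p1:
  fixes n d :: nat
  assumes "n \<ge> 1" and "d \<le> n - 1"
  defines "q \<equiv> qvar"
  shows "((\<Sum>k<n. q ^ k * qbinom q (2*k) (int k + int d) * qpoch (- (q ^ (k+1))) q (n - 1 - k))
       = (\<Sum>k\<in>{k. k \<le> n - d \<and> k mod 2 = (n - d) mod 2}.
            (-1) ^ ((n - d - k) div 2)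
            * q powi ((3 * (int n ^ 2 + int k ^ 2 - int d ^ 2) - 6 * int n * int k
                        + 4 * int n - 4 * int k) div 4)
            * ((1 - q ^ k) * (1 + q ^ (n - k + 1)) / ((1 - q ^ (2*n - k + 1)) * (1 + q ^ n)))
            * qbinom q (2*n) (int k)))
    \<and> ((\<Sum>k<n. q ^ k * qbinom q (2*k) (int k + int d) * (qpoch (- (q ^ (k+1))) q (n - 1 - k))^2)
       = (\<Sum>k=d+1..n. \<Sum>j=k+1..n+1.
            q powi ((int j ^ 2 - 3 * int j + int k ^ 2 - int k) div 2 - int d ^ 2 + 1)
            * ((1 + q ^ (j - 1)) / (1 + q ^ n))
            * qbinom q (2*n) (int n - int j + 1)))"
proof -
  have "d \<le> n" using assms(2) by simp
  then show ?thesis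
    unfolding q_def
    using qvar.weighted_qpoch_sum_eq_alternating_sum qvar.weighted_qpoch_square_sum_eq_double_sum
    by blast
qed

end
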